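(* Let $v\in\mathbb{R}^J$ and let $\mathscr{P}_2(v)=\inf\{\alpha\in\mathbb{R}\mid v+\alpha\mathbf{1}\in R(Cx+Qy),\ (x,y)\in\mathcal{X}\}$. Then $$\mathscr{P}_2(v)=\sup_{\mu\in\mathbb{M}_1^J,\ \lambda\in\mathbb{L}^M,\ \gamma\in\mathbb{R}^J_+}\Big\{\sum_{i\in\Omega}f_i(\mu_i,\lambda_i,\gamma)-\gamma^{\mathsf T}v-\beta(\mu,\gamma)\ \Big|\ \gamma^{\mathsf T}\mathbf{1}=1,\ \mathbb{E}[\lambda]=0\Big\}$$ $$\qquad=\sup_{m\in\mathbb{M}_f^J,\ \lambda\in\mathbb{L}^M}\Big\{\sum_{i\in\Omega}\tilde f_i(m_i,\lambda_i)-\sum_{i\in\Omega}m_i^{\mathsf T}v-\tilde\beta(m)\ \Big|\ \sum_{i\in\Omega}m_i^{\mathsf T}\mathbf{1}=1,\ \mathbb{E}[\lambda]=0\Big\}.$$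
   Context: Probability space: $\Omega=\{1,\dots,I\}$, $I\ge 2$, with probabilities $p_i>0$, $\sum_{i\in\Omega}p_i=1$. For an integer $J\ge1$, $\mathbb{L}^J$ denotes the set of random vectors $u:\Omega\to\mathbb{R}^J$, identified with tuples $(u_1,\dots,u_I)$, $u_i\in\mathbb{R}^J$; $\mathbb{L}^{J\times N}$ denotes random $J\times N$ matrices with realizations $Q_1,\dots,Q_I$; $\mathbb{L}^N_+$ the random vectors with nonnegative components; $\mathbb{E}[u]=\sum_{i}p_iu_i$. $u\le v$ means $u_i^j\le v_i^j$ for all $i,j$. $\mathbf{1}=(1,\dots,1)^{\mathsf T}\in\mathbb{R}^J$. A multivariate convex risk measure is a map $R:\mathbb{L}^J\to 2^{\mathbb{R}^J}$ such that: (A1) $u\le v$ implies $R(u)\supseteq R(v)$; (A2) $R(u+z)=R(u)+z$ for all $z\in\mathbb{R}^J$; (A3) $R(u)\notin\{\emptyset,\mathbb{R}^J\}$; (A4) $R(\gamma u+(1-\gamma)v)\supseteq\gamma R(u)+(1-\gamma)R(v)$ for $\gamma\in(0,1)$; (A5) the acceptance set $\mathcal{A}=\{u\in\mathbb{L}^J\mid 0\in R(u)\}$ is closed. $\mathbb{M}_1^J$ denotes the set of $J$-tuples $\mu=(\mu^1,\dots,\mu^J)$ of probability measures on $\Omega$, with $\mu_i=(\mu_i^1,\dots,\mu_i^J)^{\mathsf T}$, and $\mathbb{E}^\mu[u]=\sum_{i\in\Omega}\mu_i\cdot u_i$, where $\cdot$ is the componentwise (Hadamard) product. $\mathbb{M}_f^J$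 denotes the set of $J$-tuples $m=(m^1,\dots,m^J)$ of finite (nonnegative) measures on $\Omega$, with $m_i=(m_i^1,\dots,m_i^J)^{\mathsf T}\in\mathbb{R}^J_+$. The minimal penalty function is $\beta(\mu,w)=\sup_{u\in\mathcal{A}}w^{\mathsf T}\mathbb{E}^\mu[u]$ for $\mu\in\mathbb{M}_1^J$, $w\in\mathbb{R}^J_+\setminus\{0\}$; it is known that $\inf_{z\in R(u)}w^{\mathsf T}z=\sup_{\mu\in\mathbb{M}_1^J}(w^{\mathsf T}\mathbb{E}^\mu[u]-\beta(\mu,w))$. Also $\tilde\beta(m)=\sup_{u\in\mathcal{A}}\sum_{i\in\Omega}m_i^{\mathsf T}u_i$ for $m\in\mathbb{M}_f^J$. Problem data: $A\in\mathbb{R}^{K\times M}$, $b\in\mathbb{R}^K$, $C\in\mathbb{R}^{J\times M}$, random $W\in\mathbb{L}^{L\times N}$, $T\in\mathbb{L}^{L\times M}$, $h\in\mathbb{L}^L$, $Q\in\mathbb{L}^{J\times N}$; $\mathcal{X}=\{(x,y)\in\mathbb{R}^M_+\times\mathbb{L}^N_+\mid Ax=b,\ T_ix+W_iy_i=h_i\ \forall i\in\Omega\}$, assumed nonempty and compact; $Cx+Qy$ has realizations $Cx+Q_iy_i$. For each $i$, $\mathcal{F}_i=\{(x_i,y_i)\in\mathbb{R}^M_+\times\mathbb{R}^N_+\mid Ax_i=b,\ T_ix_i+W_iy_i=h_i\}$, assumed nonempty and compact. For $\mu_i\in\mathbb{R}^J_+$, $\lambda_i\in\mathbb{R}^M$,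 $\gamma\in\mathbb{R}^J_+$: $f_i(\mu_i,\lambda_i,\gamma)=\inf_{(x_i,y_i)\in\mathcal{F}_i}\big(\gamma^{\mathsf T}[\mu_i\cdot(Cx_i+Q_iy_i)]+p_i\lambda_i^{\mathsf T}x_i\big)$, and for $m_i\in\mathbb{R}^J_+$: $\tilde f_i(m_i,\lambda_i)=\inf_{(x_i,y_i)\in\mathcal{F}_i}\big(m_i^{\mathsf T}(Cx_i+Q_iy_i)+p_i\lambda_i^{\mathsf T}x_i\big)$. *)

theory Defs
  imports "HOL-Analysis.Analysis"
begin

text \<open>Omega is a finite type 'w; random vectors in L^J are functions 'w => real^'j.
  Dimensions J, M, N, K, L are the finite index types 'j, 'm, 'n, 'k, 'l.\<close>

definition ones :: "real^'j" where "ones = (\<chi> j. 1)"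

definition acceptance_set ::
  "(('w \<Rightarrow> real^'j) \<Rightarrow> (real^'j) set) \<Rightarrow> ('w \<Rightarrow> real^'j) set" where
  "acceptance_set R = {u. 0 \<in> R u}"

definition multivariate_convex_risk_measure ::
  "(('w::finite \<Rightarrow> real^'j) \<Rightarrow> (real^'j) set) \<Rightarrow> bool" where
  "multivariate_convex_risk_measure R \<longleftrightarrow>
     (\<forall>u v. (\<forall>i j. u i $ j \<le> v i $ j) \<longrightarrow> R v \<subseteq> R u) \<and>
     (\<forall>u z. R (\<lambda>i. u i + z) = (\<lambda>a. a + z) ` R u) \<and>
     (\<forall>u. R u \<noteq> {} \<and> R u \<noteq> UNIV) \<and>
     (\<forall>u v (g::real). 0 < g \<and> g < 1 \<longrightarrow>
        {g *\<^sub>R a + (1 - g) *\<^sub>R b | a b. a \<in> R u \<and> b \<in> R v}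
          \<subseteq> R (\<lambda>i. g *\<^sub>R u i + (1 - g) *\<^sub>R v i)) \<and>
     closed (acceptance_set R)"

text \<open>M_1^J: J-tuples of probability measures on Omega, mu i $ j = mu^j({i}).\<close>
definition prob_tuples :: "('w::finite \<Rightarrow> real^'j) set" where
  "prob_tuples = {mu. (\<forall>i j. 0 \<le> mu i $ j) \<and> (\<forall>j. (\<Sum>i\<in>UNIV. mu i $ j) = 1)}"

definition finite_meas_tuples :: "('w::finite \<Rightarrow> real^'j) set" where
  "finite_meas_tuples = {m. \<forall>i j. 0 \<le> m i $ j}"

definition wEmu :: "real^'j \<Rightarrow> ('w::finite \<Rightarrow> real^'j) \<Rightarrow> ('w \<Rightarrow> real^'j) \<Rightarrow> real" where
  "wEmu w mu u = (\<Sum>i\<in>UNIV. \<Sum>j\<in>UNIV. w $ j * (mu i $ j * u i $ j))"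

definition penalty ::
  "(('w::finite \<Rightarrow> real^'j) \<Rightarrow> (real^'j) set) \<Rightarrow> ('w \<Rightarrow> real^'j) \<Rightarrow> real^'j \<Rightarrow> ereal" where
  "penalty R mu w = (SUP u\<in>acceptance_set R. ereal (wEmu w mu u))"

definition penalty_tilde ::
  "(('w::finite \<Rightarrow> real^'j) \<Rightarrow> (real^'j) set) \<Rightarrow> ('w \<Rightarrow> real^'j) \<Rightarrow> ereal" where
  "penalty_tilde R m = (SUP u\<in>acceptance_set R. ereal (\<Sum>i\<in>UNIV. m i \<bullet> u i))"

definition feas_X ::
  "real^'m^'k \<Rightarrow> real^'k \<Rightarrow> ('w \<Rightarrow> real^'n^'l) \<Rightarrow> ('w \<Rightarrow> real^'m^'l) \<Rightarrow> ('w \<Rightarrow> real^'l)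
    \<Rightarrow> ((real^'m) \<times> ('w \<Rightarrow> real^'n)) set" where
  "feas_X A b W T h = {(x, y). (\<forall>k. 0 \<le> x $ k) \<and> (\<forall>i k. 0 \<le> y i $ k) \<and> A *v x = b \<and>
       (\<forall>i. T i *v x + W i *v y i = h i)}"

definition feas_F ::
  "real^'m^'k \<Rightarrow> real^'k \<Rightarrow> ('w \<Rightarrow> real^'n^'l) \<Rightarrow> ('w \<Rightarrow> real^'m^'l) \<Rightarrow> ('w \<Rightarrow> real^'l)
    \<Rightarrow> 'w \<Rightarrow> ((real^'m) \<times> (real^'n)) set" where
  "feas_F A b W T h i = {(x, y). (\<forall>k. 0 \<le> x $ k) \<and> (\<forall>k. 0 \<le> y $ k) \<and> A *v x = b \<and>
       T i *v x + W i *v y = h i}"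

definition f_dual ::
  "real^'m^'k \<Rightarrow> real^'k \<Rightarrow> real^'m^'j \<Rightarrow> ('w \<Rightarrow> real^'n^'l) \<Rightarrow> ('w \<Rightarrow> real^'m^'l)
    \<Rightarrow> ('w \<Rightarrow> real^'l) \<Rightarrow> ('w \<Rightarrow> real^'n^'j) \<Rightarrow> ('w \<Rightarrow> real)
    \<Rightarrow> 'w \<Rightarrow> real^'j \<Rightarrow> real^'m \<Rightarrow> real^'j \<Rightarrow> real" where
  "f_dual A b C W T h Q p i mui lami g =
     Inf ((\<lambda>(x, y). (\<Sum>j\<in>UNIV. g $ j * (mui $ j * (C *v x + Q i *v y) $ j)) + p i * (lami \<bullet> x))
          ` feas_F A b W T h i)"

definition f_dual_tilde ::
  "real^'m^'k \<Rightarrow> real^'k \<Rightarrow> real^'m^'j \<Rightarrow> ('w \<Rightarrow> real^'n^'l) \<Rightarrow> ('w \<Rightarrow> real^'m^'l)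
    \<Rightarrow> ('w \<Rightarrow> real^'l) \<Rightarrow> ('w \<Rightarrow> real^'n^'j) \<Rightarrow> ('w \<Rightarrow> real)
    \<Rightarrow> 'w \<Rightarrow> real^'j \<Rightarrow> real^'m \<Rightarrow> real" where
  "f_dual_tilde A b C W T h Q p i mi lami =
     Inf ((\<lambda>(x, y). mi \<bullet> (C *v x + Q i *v y) + p i * (lami \<bullet> x)) ` feas_F A b W T h i)"

definition P2 ::
  "(('w \<Rightarrow> real^'j) \<Rightarrow> (real^'j) set) \<Rightarrow> real^'m^'k \<Rightarrow> real^'k \<Rightarrow> real^'m^'j
    \<Rightarrow> ('w \<Rightarrow> real^'n^'l) \<Rightarrow> ('w \<Rightarrow> real^'m^'l) \<Rightarrow> ('w \<Rightarrow> real^'l) \<Rightarrow> ('w \<Rightarrow> real^'n^'j)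
    \<Rightarrow> real^'j \<Rightarrow> ereal" where
  "P2 R A b C W T h Q v = Inf {ereal a | a. \<exists>x y. (x, y) \<in> feas_X A b W T h \<and>
       v + a *\<^sub>R ones \<in> R (\<lambda>i. C *v x + Q i *v y i)}"

end

theory Submission imports Defs begin

text \<open>Weak duality is the Lagrangian bound: if v + \<alpha>1 \<in> R(Cx + Qy) for some (x, y) \<in> X, then
  the dual objective of any (m, \<lambda>) is at most \<alpha>, because E[\<lambda>] = 0 cancels the multiplier
  term and the penalty dominates m applied to the acceptable position.
  For strong duality, relax nonanticipativity: choose decisions scenario-wise from the compact convex
  sets F_i and map them to their losses together with the deviation of the first-stage decisions from
  their p-average. If r < P2(v), the compact convex image misses the closed convex set
  (acceptance set shifted by v + r1) \<times> {0}, and a separating hyperplane yields (m, \<lambda>). Its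
  m-part is nonnegative because the acceptance set is downward closed and nonzero because X is
  nonempty; normalised, it has dual value at least r. The (\<mu>, \<lambda>, \<gamma>) form is the same problem
  under the change of variables m^j = \<gamma>_j \<mu>^j.\<close>

lemma multivariate_convex_risk_measureD:
  assumes "multivariate_convex_risk_measure R"
  shows risk_measure_antitone: "\<And>u v. (\<forall>i j. u i $ j \<le> v i $ j) \<Longrightarrow> R v \<subseteq> R u"
    and risk_measure_translation: "\<And>u z. R (\<lambda>i. u i + z) = (\<lambda>a. a + z) ` R u"
    and risk_measure_nonempty: "\<And>u. R u \<noteq> {}"
    and risk_measure_convex: "\<And>u v g. 0 < g \<Longrightarrow> g < 1 \<Longrightarrow>
          {g *\<^sub>R a + (1 - g) *\<^sub>R b | a b. a \<in> R u \<and> b \<in> R v}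
            \<subseteq> R (\<lambda>i. g *\<^sub>R u i + (1 - g) *\<^sub>R v i)"
    and closed_acceptance_set: "closed (acceptance_set R)"
  using assms unfolding multivariate_convex_risk_measure_def by auto

lemma mem_risk_measure_iff_acceptable:
  assumes "multivariate_convex_risk_measure R"
  shows "z \<in> R u \<longleftrightarrow> (\<lambda>i. u i - z) \<in> acceptance_set R"
proof -
  have "R (\<lambda>i. u i + - z) = (\<lambda>a. a + - z) ` R u"
    by (rule risk_measure_translation[OF assms])
  then have "0 \<in> R (\<lambda>i. u i - z) \<longleftrightarrow> z \<in> R u"
    by (force simp: eq_neg_iff_add_eq_0)
  then show ?thesis
    unfolding acceptance_set_def by simp
qed

lemma acceptance_set_convex_comb:
  assumes "multivariate_convex_risk_measure R"
    and "u \<in> acceptance_set R" "w \<in> acceptance_set R" "0 \<le> g" "g \<le> 1"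
  shows "(\<lambda>i. g *\<^sub>R u i + (1 - g) *\<^sub>R w i) \<in> acceptance_set R"
proof (cases "g = 0 \<or> g = 1")
  case True
  then show ?thesis using assms(2,3) by (elim disjE) simp_all
next
  case False
  then have "0 < g" "g < 1" using assms(4,5) by auto
  moreover have "0 \<in> R u" "0 \<in> R w" using assms(2,3) unfolding acceptance_set_def by auto
  then have "g *\<^sub>R 0 + (1 - g) *\<^sub>R 0 \<in> {g *\<^sub>R a + (1 - g) *\<^sub>R b | a b. a \<in> R u \<and> b \<in> R w}"
    by blast
  ultimately show ?thesis
    using risk_measure_convex[OF assms(1)] unfolding acceptance_set_def by fastforce
qed

lemma acceptance_set_nonempty:
  assumes "multivariate_convex_risk_measure R"
  shows "acceptance_set R \<noteq> {}"
proof -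
  obtain z where "z \<in> R (\<lambda>i. 0)"
    using risk_measure_nonempty[OF assms] by blast
  then show ?thesis
    using mem_risk_measure_iff_acceptable[OF assms] by blast
qed

lemma acceptance_set_downward_closed:
  assumes "multivariate_convex_risk_measure R" "u \<in> acceptance_set R"
    and "\<And>i j. w i $ j \<le> u i $ j"
  shows "w \<in> acceptance_set R"
  using assms(2) risk_measure_antitone[OF assms(1)] assms(3) unfolding acceptance_set_def by blast

lemma acceptance_functional_nonneg:
  assumes risk: "multivariate_convex_risk_measure R"
    and bound: "\<And>u. u \<in> acceptance_set R \<Longrightarrow> (\<Sum>i\<in>UNIV. m i \<bullet> u i) \<le> c"
  shows "0 \<le> m i $ j"
proof (rule ccontr)
  assume neg: "\<not> 0 \<le> m i $ j"
  obtain u where u: "u \<in> acceptance_set R" using acceptance_set_nonempty[OF risk] by blast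
  define t where "t = (c + 1 - (\<Sum>i\<in>UNIV. m i \<bullet> u i)) / (- m i $ j)"
  define w where "w = u(i := u i - t *\<^sub>R axis j 1)"
  have "t \<ge> 0"
    using bound[OF u] neg unfolding t_def by (intro divide_nonneg_pos) auto
  then have "w i' $ j' \<le> u i' $ j'" for i' j'
    unfolding w_def by (simp add: axis_def)
  then have "w \<in> acceptance_set R"
    by (rule acceptance_set_downward_closed[OF risk u])
  moreover have "(\<Sum>i\<in>UNIV. m i \<bullet> w i) = (\<Sum>i\<in>UNIV. m i \<bullet> u i) - t * m i $ j"
    unfolding w_def by (simp add: sum.remove[of UNIV i] inner_diff_right inner_axis)
  moreover have "t * (- m i $ j) = c + 1 - (\<Sum>i\<in>UNIV. m i \<bullet> u i)"
    unfolding t_def using neg by simp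
  ultimately show False using bound[of w] by linarith
qed

lemma closed_convex_shifted_acceptance:
  fixes R :: "('w::finite \<Rightarrow> real^'j::finite) \<Rightarrow> (real^'j) set" and w :: "real^'j"
  assumes risk: "multivariate_convex_risk_measure R"
  defines "S \<equiv> {U :: real^'j^'w. (\<lambda>i. U $ i - w) \<in> acceptance_set R}"
  shows "closed S" and "convex S"
proof -
  have "continuous_on UNIV (\<lambda>U :: real^'j^'w. (\<lambda>i. U $ i - w))"
    by (intro continuous_on_coordinatewise_then_product continuous_intros)
  then show "closed S"
    unfolding S_def using closed_vimage[OF closed_acceptance_set[OF risk]] by (simp add: vimage_def)
  show "convex S"
    unfolding S_def
  proof (rule convexI, clarsimp)
    fix U V :: "real^'j^'w" and s t :: real
    assume acc: "(\<lambda>i. U $ i - w) \<in> acceptance_set R" "(\<lambda>i. V $ i - w) \<in> acceptance_set R"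
      and st: "0 \<le> s" "0 \<le> t" "s + t = 1"
    have "(\<lambda>i. s *\<^sub>R (U $ i - w) + (1 - s) *\<^sub>R (V $ i - w)) \<in> acceptance_set R"
      using acceptance_set_convex_comb[OF risk acc] st by simp
    moreover have "s *\<^sub>R (U $ i - w) + (1 - s) *\<^sub>R (V $ i - w) = s *\<^sub>R U $ i + t *\<^sub>R V $ i - w" for i
      using st(3) by (simp add: algebra_simps flip: scaleR_add_left)
    ultimately show "(\<lambda>i. s *\<^sub>R U $ i + t *\<^sub>R V $ i - w) \<in> acceptance_set R" by simp
  qed
qed

lemma compact_vec_set:
  fixes F :: "'w::finite \<Rightarrow> ('a::euclidean_space) set"
  assumes "\<And>i. compact (F i)"
  shows "compact {z::'a^'w. \<forall>i. z $ i \<in> F i}"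
proof -
  have "{z::'a^'w. \<forall>i. z $ i \<in> F i} = (\<Inter>i. (\<lambda>z. z $ i) -` F i)" by auto
  moreover have "closed ((\<lambda>z::'a^'w. z $ i) -` F i)" for i
    using assms compact_imp_closed closed_vimage_vec_nth by blast
  ultimately have closed: "closed {z::'a^'w. \<forall>i. z $ i \<in> F i}"
    by (simp add: closed_INT)
  have "\<forall>i. \<exists>B. \<forall>x\<in>F i. norm x \<le> B"
    using assms by (metis compact_imp_bounded bounded_iff)
  then obtain B where B: "\<And>i x. x \<in> F i \<Longrightarrow> norm x \<le> B i"
    by metis
  have "norm z \<le> (\<Sum>i\<in>UNIV. B i)" if "\<forall>i. z $ i \<in> F i" for z :: "'a^'w"
  proof -
    have "norm z \<le> (\<Sum>i\<in>UNIV. norm (z $ i))" unfolding norm_vec_def by (rule L2_set_le_sum) simp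
    also have "\<dots> \<le> (\<Sum>i\<in>UNIV. B i)" using that B by (intro sum_mono) auto
    finally show ?thesis .
  qed
  then have "bounded {z::'a^'w. \<forall>i. z $ i \<in> F i}" unfolding bounded_iff by blast
  with closed show ?thesis by (simp add: compact_eq_bounded_closed)
qed

lemma convex_vec_set:
  fixes F :: "'w::finite \<Rightarrow> ('a::real_vector) set"
  assumes "\<And>i. convex (F i)"
  shows "convex {z::'a^'w. \<forall>i. z $ i \<in> F i}"
  using assms unfolding convex_def by auto

text \<open>Turns a multiplier n of the constraints x_i = E[x] into a \<lambda> with E[\<lambda>] = 0.\<close>

lemma sum_centered_multiplier:
  fixes p :: "'w::finite \<Rightarrow> real" and n x :: "'w \<Rightarrow> 'a::real_inner"
  assumes p: "\<And>i. p i \<noteq> 0" "(\<Sum>i\<in>UNIV. p i) = 1"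
  defines "lam \<equiv> \<lambda>i. (1 / p i) *\<^sub>R n i - (\<Sum>k\<in>UNIV. n k)"
  shows "(\<Sum>i\<in>UNIV. p i *\<^sub>R lam i) = 0"
    and "(\<Sum>i\<in>UNIV. p i * (lam i \<bullet> x i)) = (\<Sum>i\<in>UNIV. n i \<bullet> (x i - (\<Sum>k\<in>UNIV. p k *\<^sub>R x k)))"
proof -
  have p_lam: "p i *\<^sub>R lam i = n i - p i *\<^sub>R (\<Sum>k\<in>UNIV. n k)" for i
    unfolding lam_def using p(1)[of i] by (simp add: algebra_simps)
  then show "(\<Sum>i\<in>UNIV. p i *\<^sub>R lam i) = 0"
    using p(2) by (simp add: sum_subtractf flip: scaleR_sum_left)
  have "(\<Sum>i\<in>UNIV. p i * (lam i \<bullet> x i)) = (\<Sum>i\<in>UNIV. (n i - p i *\<^sub>R (\<Sum>k\<in>UNIV. n k)) \<bullet> x i)"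
    by (simp flip: p_lam)
  also have "\<dots> = (\<Sum>i\<in>UNIV. n i \<bullet> x i) - (\<Sum>k\<in>UNIV. n k) \<bullet> (\<Sum>i\<in>UNIV. p i *\<^sub>R x i)"
    by (simp add: inner_diff_left sum_subtractf inner_sum_right)
  also have "\<dots> = (\<Sum>i\<in>UNIV. n i \<bullet> (x i - (\<Sum>k\<in>UNIV. p k *\<^sub>R x k)))"
    by (simp add: inner_diff_right sum_subtractf inner_sum_left)
  finally show "(\<Sum>i\<in>UNIV. p i * (lam i \<bullet> x i)) = (\<Sum>i\<in>UNIV. n i \<bullet> (x i - (\<Sum>k\<in>UNIV. p k *\<^sub>R x k)))" .
qed

lemma ereal_le_of_reals_below:
  fixes x y :: ereal
  assumes "\<And>r. ereal r < x \<Longrightarrow> ereal r \<le> y"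
  shows "x \<le> y"
proof (rule dense_le)
  fix z assume "z < x"
  then show "z \<le> y"
    using assms by (cases z) auto
qed

lemma ereal_diff_le_ereal:
  assumes "ereal (d - a) \<le> P"
  shows "ereal d - P \<le> ereal a"
  using assms by (cases P) auto

lemma ereal_le_diff_ereal:
  assumes "P \<le> ereal (d - r)"
  shows "ereal r \<le> ereal d - P"
  using assms by (cases P) auto

definition scale_components :: "real^'j \<Rightarrow> ('w \<Rightarrow> real^'j) \<Rightarrow> 'w \<Rightarrow> real^'j" where
  "scale_components g mu i = (\<chi> j. g $ j * mu i $ j)"

lemma sum_inner_scale_components:
  assumes "mu \<in> prob_tuples"
  shows "(\<Sum>i\<in>UNIV. scale_components g mu i \<bullet> v) = g \<bullet> v"
proof -
  have "(\<Sum>i\<in>UNIV. scale_components g mu i \<bullet> v) = (\<Sum>j\<in>UNIV. g $ j * v $ j * (\<Sum>i\<in>UNIV. mu i $ j))"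
    unfolding scale_components_def inner_vec_def
    by (simp add: sum_distrib_left algebra_simps) (rule sum.swap)
  then show ?thesis
    using assms unfolding prob_tuples_def inner_vec_def by simp
qed

lemma scale_components_mem_finite_meas_tuples:
  assumes "mu \<in> prob_tuples" "\<forall>j. 0 \<le> g $ j"
  shows "scale_components g mu \<in> finite_meas_tuples"
  using assms unfolding prob_tuples_def finite_meas_tuples_def scale_components_def by simp

lemma finite_meas_tuple_eq_scale_components:
  fixes m :: "'w::finite \<Rightarrow> real^'j::finite"
  assumes m: "m \<in> finite_meas_tuples" "(\<Sum>i\<in>UNIV. m i \<bullet> ones) = 1"
  obtains mu g where "mu \<in> prob_tuples" "\<forall>j. 0 \<le> g $ j" "g \<bullet> ones = 1"
    "m = scale_components g mu"
proof -
  define g :: "real^'j" where "g = (\<chi> j. \<Sum>i\<in>UNIV. m i $ j)"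
  \<comment> \<open>where a column sum vanishes, any probability vector will do\<close>
  define mu :: "'w \<Rightarrow> real^'j" where
    "mu = (\<lambda>i. \<chi> j. if g $ j = 0 then 1 / real CARD('w) else m i $ j / g $ j)"
  have m_nonneg: "0 \<le> m i $ j" for i j using m(1) unfolding finite_meas_tuples_def by auto
  then have g_nonneg: "\<forall>j. 0 \<le> g $ j" unfolding g_def by (simp add: sum_nonneg)
  have "g \<bullet> ones = (\<Sum>i\<in>UNIV. m i \<bullet> ones)"
    unfolding g_def inner_vec_def ones_def by simp (rule sum.swap)
  with m(2) have "g \<bullet> ones = 1" by simp
  moreover have "(\<Sum>i\<in>UNIV. mu i $ j) = 1" for j
  proof (cases "g $ j = 0")
    case False
    then show ?thesis unfolding mu_def by (simp flip: sum_divide_distrib) (simp add: g_def)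
  qed (simp add: mu_def)
  then have "mu \<in> prob_tuples"
    unfolding prob_tuples_def mu_def using m_nonneg g_nonneg by simp
  moreover have "m i $ j = g $ j * mu i $ j" for i j
  proof (cases "g $ j = 0")
    case True
    then have "(\<Sum>i\<in>UNIV. m i $ j) = 0" unfolding g_def by simp
    then have "m i $ j = 0" using m_nonneg sum_nonneg_eq_0_iff[of UNIV "\<lambda>i. m i $ j"] by simp
    with True show ?thesis by simp
  qed (simp add: mu_def)
  then have "m = scale_components g mu"
    unfolding scale_components_def by (simp add: fun_eq_iff vec_eq_iff)
  ultimately show ?thesis using that g_nonneg by blast
qed

lemma penalty_eq_penalty_tilde_scale_components:
  "penalty R mu g = penalty_tilde R (scale_components g mu)"
  unfolding penalty_def penalty_tilde_def wEmu_def scale_components_def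
  by (simp add: inner_vec_def mult.assoc)

lemma f_dual_eq_f_dual_tilde_scale_components:
  "f_dual A b C W T h Q p i (mu i) lami g = f_dual_tilde A b C W T h Q p i (scale_components g mu i) lami"
  unfolding f_dual_def f_dual_tilde_def scale_components_def
  by (simp add: inner_vec_def mult.assoc)

locale two_stage_problem =
  fixes p :: "'w::finite \<Rightarrow> real"
    and R :: "('w \<Rightarrow> real^'j::finite) \<Rightarrow> (real^'j) set"
    and A :: "real^'m::finite^'k::finite" and b :: "real^'k"
    and C :: "real^'m^'j"
    and W :: "'w \<Rightarrow> real^'n::finite^'l::finite" and T :: "'w \<Rightarrow> real^'m^'l"
    and h :: "'w \<Rightarrow> real^'l" and Q :: "'w \<Rightarrow> real^'n^'j"
  assumes p_pos: "\<And>i. 0 < p i" and p_sum: "(\<Sum>i\<in>UNIV. p i) = 1"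
    and risk: "multivariate_convex_risk_measure R"
    and X_nonempty: "feas_X A b W T h \<noteq> {}"
    and F_nonempty: "\<And>i. feas_F A b W T h i \<noteq> {}"
    and F_compact: "\<And>i. compact (feas_F A b W T h i)"
begin

abbreviation F :: "'w \<Rightarrow> ((real^'m) \<times> (real^'n)) set" where
  "F \<equiv> feas_F A b W T h"

abbreviation X :: "((real^'m) \<times> ('w \<Rightarrow> real^'n)) set" where
  "X \<equiv> feas_X A b W T h"

lemma p_nonzero: "p i \<noteq> 0"
  using p_pos[of i] by simp

lemma feas_X_iff: "(x, y) \<in> X \<longleftrightarrow> (\<forall>i. (x, y i) \<in> F i)"
  unfolding feas_X_def feas_F_def by auto

lemma convex_F: "convex (F i)"
proof (rule convexI)
  fix z z' and s t :: real
  assume "z \<in> F i" "z' \<in> F i" and st: "0 \<le> s" "0 \<le> t" "s + t = 1"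
  then obtain x y x' y' where z: "z = (x, y)" "z' = (x', y')"
    and feas: "\<forall>k. 0 \<le> x $ k" "\<forall>k. 0 \<le> y $ k" "A *v x = b" "T i *v x + W i *v y = h i"
      "\<forall>k. 0 \<le> x' $ k" "\<forall>k. 0 \<le> y' $ k" "A *v x' = b" "T i *v x' + W i *v y' = h i"
    unfolding feas_F_def by auto
  have "A *v (s *\<^sub>R x + t *\<^sub>R x') = (s + t) *\<^sub>R b"
    using feas by (simp add: matrix_vector_right_distrib matrix_vector_mult_scaleR scaleR_add_left)
  moreover have "T i *v (s *\<^sub>R x + t *\<^sub>R x') + W i *v (s *\<^sub>R y + t *\<^sub>R y')
      = s *\<^sub>R (T i *v x + W i *v y) + t *\<^sub>R (T i *v x' + W i *v y')"
    by (simp add: matrix_vector_right_distrib matrix_vector_mult_scaleR algebra_simps)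
  then have "T i *v (s *\<^sub>R x + t *\<^sub>R x') + W i *v (s *\<^sub>R y + t *\<^sub>R y') = (s + t) *\<^sub>R h i"
    using feas by (simp add: scaleR_add_left)
  ultimately show "s *\<^sub>R z + t *\<^sub>R z' \<in> F i"
    using feas st unfolding z feas_F_def by simp
qed

definition scenario_lagrangian :: "'w \<Rightarrow> real^'j \<Rightarrow> real^'m \<Rightarrow> (real^'m) \<times> (real^'n) \<Rightarrow> real" where
  "scenario_lagrangian i mi lami z = mi \<bullet> (C *v fst z + Q i *v snd z) + p i * (lami \<bullet> fst z)"

lemma f_dual_tilde_eq_Inf:
  "f_dual_tilde A b C W T h Q p i mi lami = Inf (scenario_lagrangian i mi lami ` F i)"
  unfolding f_dual_tilde_def scenario_lagrangian_def by (simp add: case_prod_beta')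

lemma continuous_on_scenario_lagrangian: "continuous_on S (scenario_lagrangian i mi lami)"
  unfolding scenario_lagrangian_def
  by (intro continuous_intros bounded_linear.continuous_on[OF matrix_vector_mul_bounded_linear])

lemma f_dual_tilde_le:
  assumes "z \<in> F i"
  shows "f_dual_tilde A b C W T h Q p i mi lami \<le> scenario_lagrangian i mi lami z"
proof -
  have "compact (scenario_lagrangian i mi lami ` F i)"
    by (rule compact_continuous_image[OF continuous_on_scenario_lagrangian F_compact])
  then have "bdd_below (scenario_lagrangian i mi lami ` F i)"
    by (intro bounded_imp_bdd_below compact_imp_bounded)
  then show ?thesis
    unfolding f_dual_tilde_eq_Inf using assms by (simp add: cInf_lower)
qed

lemma f_dual_tilde_attained:
  obtains z where "z \<in> F i" "f_dual_tilde A b C W T h Q p i mi lami = scenario_lagrangian i mi lami z"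
proof -
  obtain z where z: "z \<in> F i" "\<forall>z'\<in>F i. scenario_lagrangian i mi lami z \<le> scenario_lagrangian i mi lami z'"
    using continuous_attains_inf[OF F_compact F_nonempty continuous_on_scenario_lagrangian] by blast
  then have "f_dual_tilde A b C W T h Q p i mi lami = scenario_lagrangian i mi lami z"
    unfolding f_dual_tilde_eq_Inf by (intro cInf_eq_minimum) auto
  with z(1) show ?thesis by (rule that)
qed

lemma P2_le:
  assumes "(x, y) \<in> X" "(\<lambda>i. C *v x + Q i *v y i - (v + a *\<^sub>R ones)) \<in> acceptance_set R"
  shows "P2 R A b C W T h Q v \<le> ereal a"
  unfolding P2_def using assms mem_risk_measure_iff_acceptable[OF risk]
  by (intro Inf_lower) blast

definition dual_feasible :: "(('w \<Rightarrow> real^'j) \<times> ('w \<Rightarrow> real^'m)) set" where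
  "dual_feasible = {(m, lam) | m lam. m \<in> finite_meas_tuples \<and> (\<Sum>i\<in>UNIV. m i \<bullet> ones) = 1 \<and>
     (\<Sum>i\<in>UNIV. p i *\<^sub>R lam i) = 0}"

definition dual_value :: "real^'j \<Rightarrow> ('w \<Rightarrow> real^'j) \<Rightarrow> ('w \<Rightarrow> real^'m) \<Rightarrow> ereal" where
  "dual_value v m lam = ereal ((\<Sum>i\<in>UNIV. f_dual_tilde A b C W T h Q p i (m i) (lam i))
     - (\<Sum>i\<in>UNIV. m i \<bullet> v)) - penalty_tilde R m"

lemma weak_duality:
  assumes "(m, lam) \<in> dual_feasible"
  shows "dual_value v m lam \<le> P2 R A b C W T h Q v"
  unfolding P2_def
proof (rule Inf_greatest, clarify)
  fix a x y
  assume X: "(x, y) \<in> X" and a: "v + a *\<^sub>R ones \<in> R (\<lambda>i. C *v x + Q i *v y i)"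
  have m_ones: "(\<Sum>i\<in>UNIV. m i \<bullet> ones) = 1" and lam: "(\<Sum>i\<in>UNIV. p i *\<^sub>R lam i) = 0"
    using assms unfolding dual_feasible_def by auto
  define loss where "loss = (\<Sum>i\<in>UNIV. m i \<bullet> (C *v x + Q i *v y i))"
  have "(\<Sum>i\<in>UNIV. f_dual_tilde A b C W T h Q p i (m i) (lam i))
      \<le> (\<Sum>i\<in>UNIV. scenario_lagrangian i (m i) (lam i) (x, y i))"
    using X by (intro sum_mono f_dual_tilde_le) (simp add: feas_X_iff)
  also have "\<dots> = loss + (\<Sum>i\<in>UNIV. p i *\<^sub>R lam i) \<bullet> x"
    unfolding scenario_lagrangian_def loss_def by (simp add: sum.distrib inner_sum_left)
  finally have f_le: "(\<Sum>i\<in>UNIV. f_dual_tilde A b C W T h Q p i (m i) (lam i)) \<le> loss"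
    using lam by simp
  have "(\<lambda>i. C *v x + Q i *v y i - (v + a *\<^sub>R ones)) \<in> acceptance_set R"
    using a by (simp add: mem_risk_measure_iff_acceptable[OF risk])
  then have "ereal (\<Sum>i\<in>UNIV. m i \<bullet> (C *v x + Q i *v y i - (v + a *\<^sub>R ones))) \<le> penalty_tilde R m"
    unfolding penalty_tilde_def by (rule SUP_upper)
  moreover have "(\<Sum>i\<in>UNIV. m i \<bullet> (C *v x + Q i *v y i - (v + a *\<^sub>R ones)))
      = loss - (\<Sum>i\<in>UNIV. m i \<bullet> v) - a"
    using m_ones unfolding loss_def
    by (simp add: inner_diff_right inner_add_right sum_subtractf sum.distrib flip: sum_distrib_left)
  ultimately have "ereal (loss - (\<Sum>i\<in>UNIV. m i \<bullet> v) - a) \<le> penalty_tilde R m"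
    by simp
  with f_le have "ereal ((\<Sum>i\<in>UNIV. f_dual_tilde A b C W T h Q p i (m i) (lam i))
      - (\<Sum>i\<in>UNIV. m i \<bullet> v) - a) \<le> penalty_tilde R m"
    by (elim order_trans[rotated]) simp
  then show "dual_value v m lam \<le> ereal a"
    unfolding dual_value_def by (rule ereal_diff_le_ereal)
qed

text \<open>The second component measures the violation of nonanticipativity: a scenario-wise decision
  comes from an element of X exactly when it vanishes.\<close>

definition loss_and_gap :: "((real^'m) \<times> (real^'n))^'w \<Rightarrow> (real^'j^'w) \<times> (real^'m^'w)" where
  "loss_and_gap z = ((\<chi> i. C *v fst (z $ i) + Q i *v snd (z $ i)),
                     (\<chi> i. fst (z $ i) - (\<Sum>k\<in>UNIV. p k *\<^sub>R fst (z $ k))))"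

lemma linear_loss_and_gap: "linear loss_and_gap"
  by (rule linearI)
    (simp_all add: loss_and_gap_def vec_eq_iff matrix_vector_right_distrib matrix_vector_mult_scaleR
      scaleR_sum_right sum.distrib algebra_simps)

lemma separation_below_P2:
  assumes r: "ereal r < P2 R A b C W T h Q v"
  obtains mm :: "'w \<Rightarrow> real^'j" and c :: real and nn :: "'w \<Rightarrow> real^'m" where
    "\<forall>u\<in>acceptance_set R. (\<Sum>i\<in>UNIV. mm i \<bullet> (u i + (v + r *\<^sub>R ones))) \<le> c"
    "\<forall>z. (\<forall>i. z i \<in> F i) \<longrightarrow>
       c < (\<Sum>i\<in>UNIV. mm i \<bullet> (C *v fst (z i) + Q i *v snd (z i))
                      + nn i \<bullet> (fst (z i) - (\<Sum>k\<in>UNIV. p k *\<^sub>R fst (z k))))"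
proof -
  define Z where "Z = {z :: ((real^'m) \<times> (real^'n))^'w. \<forall>i. z $ i \<in> F i}"
  define B where "B = {U :: real^'j^'w. (\<lambda>i. U $ i - (v + r *\<^sub>R ones)) \<in> acceptance_set R}
    \<times> {0 :: real^'m^'w}"
  have compact_K: "compact (loss_and_gap ` Z)"
    unfolding Z_def using linear_loss_and_gap
    by (intro compact_continuous_image linear_continuous_on compact_vec_set F_compact)
      (simp_all add: linear_conv_bounded_linear)
  have convex_K: "convex (loss_and_gap ` Z)"
    unfolding Z_def by (intro convex_linear_image linear_loss_and_gap convex_vec_set convex_F)
  have "(\<chi> i. SOME z. z \<in> F i) \<in> Z"
    unfolding Z_def using F_nonempty by (simp add: some_in_eq)
  then have nonempty_K: "loss_and_gap ` Z \<noteq> {}" by blast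
  have closed_B: "closed B"
    unfolding B_def by (intro closed_Times closed_singleton closed_convex_shifted_acceptance[OF risk])
  have convex_B: "convex B"
    unfolding B_def by (intro convex_Times convex_singleton closed_convex_shifted_acceptance[OF risk])
  have disjoint: "loss_and_gap ` Z \<inter> B = {}"
  proof (rule equals0I)
    fix k assume "k \<in> loss_and_gap ` Z \<inter> B"
    then obtain z where "z \<in> Z" "loss_and_gap z \<in> B"
      by blast
    then have z: "\<And>i. z $ i \<in> F i" and gap: "snd (loss_and_gap z) = 0"
      and loss: "(\<lambda>i. fst (loss_and_gap z) $ i - (v + r *\<^sub>R ones)) \<in> acceptance_set R"
      unfolding Z_def B_def by (simp_all add: mem_Times_iff)
    define x where "x = (\<Sum>k\<in>UNIV. p k *\<^sub>R fst (z $ k))"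
    define y where "y = (\<lambda>i. snd (z $ i))"
    have "(\<chi> i. fst (z $ i) - x) = 0"
      using gap unfolding loss_and_gap_def x_def by simp
    then have "(\<chi> i. fst (z $ i) - x) $ i = 0 $ i" for i
      by (simp only:)
    then have "fst (z $ i) = x" for i
      by simp
    then have z_eq: "z $ i = (x, y i)" for i
      unfolding y_def by (simp add: prod_eq_iff)
    then have "(x, y) \<in> X"
      using z by (simp add: feas_X_iff)
    moreover have "(\<lambda>i. C *v x + Q i *v y i - (v + r *\<^sub>R ones)) \<in> acceptance_set R"
      using loss unfolding loss_and_gap_def by (simp add: z_eq)
    ultimately have "P2 R A b C W T h Q v \<le> ereal r"
      by (rule P2_le)
    with r show False by simp
  qed
  obtain a c where sep_K: "\<And>k. k \<in> loss_and_gap ` Z \<Longrightarrow> a \<bullet> k < c"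
    and sep_B: "\<And>k. k \<in> B \<Longrightarrow> c < a \<bullet> k"
    using separating_hyperplane_compact_closed[OF convex_K compact_K nonempty_K convex_B closed_B disjoint]
    by blast
  show ?thesis
  proof (rule that[of "\<lambda>i. - (fst a $ i)" "- c" "\<lambda>i. - (snd a $ i)"]; intro ballI allI impI)
    fix u assume "u \<in> acceptance_set R"
    then have "((\<chi> i. u i + (v + r *\<^sub>R ones)), 0) \<in> B"
      unfolding B_def by simp
    from sep_B[OF this] show "(\<Sum>i\<in>UNIV. - fst a $ i \<bullet> (u i + (v + r *\<^sub>R ones))) \<le> - c"
      by (cases a) (simp add: inner_vec_def sum_negf)
  next
    fix z :: "'w \<Rightarrow> (real^'m) \<times> (real^'n)"
    assume "\<forall>i. z i \<in> F i"
    then have "(\<chi> i. z i) \<in> Z" unfolding Z_def by simp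
    from sep_K[OF imageI[OF this]]
    show "- c < (\<Sum>i\<in>UNIV. - fst a $ i \<bullet> (C *v fst (z i) + Q i *v snd (z i))
                 + - snd a $ i \<bullet> (fst (z i) - (\<Sum>k\<in>UNIV. p k *\<^sub>R fst (z k))))"
      by (cases a) (simp add: loss_and_gap_def inner_vec_def sum_negf sum.distrib sum_subtractf)
  qed
qed

lemma strong_duality:
  assumes r: "ereal r < P2 R A b C W T h Q v"
  obtains m lam where "(m, lam) \<in> dual_feasible" "ereal r \<le> dual_value v m lam"
proof -
  obtain mm c nn
    where acc: "\<forall>u\<in>acceptance_set R. (\<Sum>i\<in>UNIV. mm i \<bullet> (u i + (v + r *\<^sub>R ones))) \<le> c"
      and gap: "\<forall>z. (\<forall>i. z i \<in> F i) \<longrightarrow>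
        c < (\<Sum>i\<in>UNIV. mm i \<bullet> (C *v fst (z i) + Q i *v snd (z i))
                       + nn i \<bullet> (fst (z i) - (\<Sum>k\<in>UNIV. p k *\<^sub>R fst (z k))))"
    by (rule separation_below_P2[OF r])
  define s where "s = (\<Sum>i\<in>UNIV. mm i \<bullet> ones)"
  define c' where "c' = c - (\<Sum>i\<in>UNIV. mm i \<bullet> v) - r * s"
  have acc': "(\<Sum>i\<in>UNIV. mm i \<bullet> u i) \<le> c'" if "u \<in> acceptance_set R" for u
    using acc[rule_format, OF that] unfolding c'_def s_def
    by (simp add: inner_add_right sum.distrib sum_distrib_left)
  have mm_nonneg: "0 \<le> mm i $ j" for i j
    by (rule acceptance_functional_nonneg[OF risk acc'])
  \<comment> \<open>a functional vanishing on the losses cannot separate, as X is nonempty\<close>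
  have "0 < s"
  proof -
    have "0 \<le> s"
      unfolding s_def ones_def inner_vec_def using mm_nonneg by (simp add: sum_nonneg)
    moreover have "s \<noteq> 0"
    proof
      assume "s = 0"
      then have "(\<Sum>i\<in>UNIV. \<Sum>j\<in>UNIV. mm i $ j) = 0"
        unfolding s_def ones_def inner_vec_def by simp
      then have "mm i $ j = 0" for i j
        using mm_nonneg by (simp add: sum_nonneg sum_nonneg_eq_0_iff)
      then have mm_zero: "mm i = 0" for i
        by (simp add: vec_eq_iff)
      obtain u where "u \<in> acceptance_set R"
        using acceptance_set_nonempty[OF risk] by blast
      from acc[rule_format, OF this] have "0 \<le> c"
        by (simp add: mm_zero)
      obtain x y where "(x, y) \<in> X"
        using X_nonempty by auto
      then have "c < (\<Sum>i\<in>UNIV. nn i \<bullet> (x - (\<Sum>k\<in>UNIV. p k *\<^sub>R x)))"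
        using gap[rule_format, of "\<lambda>i. (x, y i)"] by (simp add: feas_X_iff mm_zero)
      also have "\<dots> = 0"
        using p_sum by (simp flip: scaleR_sum_left)
      finally show False
        using \<open>0 \<le> c\<close> by simp
    qed
    ultimately show ?thesis by simp
  qed
  define m where "m = (\<lambda>i. (1 / s) *\<^sub>R mm i)"
  define lam where "lam = (\<lambda>i. (1 / p i) *\<^sub>R ((1 / s) *\<^sub>R nn i) - (\<Sum>k\<in>UNIV. (1 / s) *\<^sub>R nn k))"
  have lam_sum: "(\<Sum>i\<in>UNIV. p i *\<^sub>R lam i) = 0"
    unfolding lam_def by (rule sum_centered_multiplier(1)[OF p_nonzero p_sum])
  have lam_inner: "(\<Sum>i\<in>UNIV. p i * (lam i \<bullet> x i))
      = (\<Sum>i\<in>UNIV. ((1 / s) *\<^sub>R nn i) \<bullet> (x i - (\<Sum>k\<in>UNIV. p k *\<^sub>R x k)))" for x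
    unfolding lam_def by (rule sum_centered_multiplier(2)[OF p_nonzero p_sum])
  have "m \<in> finite_meas_tuples"
    unfolding finite_meas_tuples_def m_def using mm_nonneg \<open>0 < s\<close> by simp
  moreover have "(\<Sum>i\<in>UNIV. m i \<bullet> ones) = 1"
    unfolding m_def using \<open>0 < s\<close> by (simp add: s_def flip: sum_divide_distrib)
  ultimately have feasible: "(m, lam) \<in> dual_feasible"
    unfolding dual_feasible_def using lam_sum by simp
  have "penalty_tilde R m \<le> ereal (c' / s)"
    unfolding penalty_tilde_def
  proof (rule SUP_least)
    fix u assume "u \<in> acceptance_set R"
    then have "(\<Sum>i\<in>UNIV. mm i \<bullet> u i) / s \<le> c' / s"
      using acc' \<open>0 < s\<close> by (simp add: divide_right_mono)
    then show "ereal (\<Sum>i\<in>UNIV. m i \<bullet> u i) \<le> ereal (c' / s)"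
      unfolding m_def by (simp add: sum_divide_distrib)
  qed
  moreover have "c' / s + r < (\<Sum>i\<in>UNIV. f_dual_tilde A b C W T h Q p i (m i) (lam i)) - (\<Sum>i\<in>UNIV. m i \<bullet> v)"
  proof -
    have "\<forall>i. \<exists>z. z \<in> F i \<and> f_dual_tilde A b C W T h Q p i (m i) (lam i) = scenario_lagrangian i (m i) (lam i) z"
      using f_dual_tilde_attained by blast
    then obtain z where z: "\<And>i. z i \<in> F i"
      and f_eq: "\<And>i. f_dual_tilde A b C W T h Q p i (m i) (lam i) = scenario_lagrangian i (m i) (lam i) (z i)"
      by metis
    define G where "G = (\<Sum>i\<in>UNIV. mm i \<bullet> (C *v fst (z i) + Q i *v snd (z i))
                       + nn i \<bullet> (fst (z i) - (\<Sum>k\<in>UNIV. p k *\<^sub>R fst (z k))))"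
    have "(\<Sum>i\<in>UNIV. f_dual_tilde A b C W T h Q p i (m i) (lam i))
        = (\<Sum>i\<in>UNIV. m i \<bullet> (C *v fst (z i) + Q i *v snd (z i))) + (\<Sum>i\<in>UNIV. p i * (lam i \<bullet> fst (z i)))"
      unfolding f_eq scenario_lagrangian_def by (simp add: sum.distrib)
    also have "\<dots> = G / s"
      unfolding lam_inner G_def m_def
      by (simp add: sum.distrib sum_divide_distrib add_divide_distrib)
    finally have "(\<Sum>i\<in>UNIV. f_dual_tilde A b C W T h Q p i (m i) (lam i)) - (\<Sum>i\<in>UNIV. m i \<bullet> v)
        = (G - (\<Sum>i\<in>UNIV. mm i \<bullet> v)) / s"
      unfolding m_def by (simp add: sum_divide_distrib diff_divide_distrib)
    moreover have "c' + r * s < G - (\<Sum>i\<in>UNIV. mm i \<bullet> v)"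
      using gap[rule_format, OF z] unfolding G_def c'_def by simp
    ultimately show ?thesis
      using \<open>0 < s\<close> by (simp add: field_simps)
  qed
  ultimately have "penalty_tilde R m \<le> ereal ((\<Sum>i\<in>UNIV. f_dual_tilde A b C W T h Q p i (m i) (lam i))
      - (\<Sum>i\<in>UNIV. m i \<bullet> v) - r)"
    by (elim order_trans) simp
  then have "ereal r \<le> dual_value v m lam"
    unfolding dual_value_def by (rule ereal_le_diff_ereal)
  with feasible show ?thesis
    by (rule that)
qed

theorem P2_eq_SUP_dual_value:
  "P2 R A b C W T h Q v = (SUP (m, lam) \<in> dual_feasible. dual_value v m lam)"
proof (rule antisym)
  show "P2 R A b C W T h Q v \<le> (SUP (m, lam) \<in> dual_feasible. dual_value v m lam)"
  proof (rule ereal_le_of_reals_below)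
    fix r assume "ereal r < P2 R A b C W T h Q v"
    then obtain m lam where "(m, lam) \<in> dual_feasible" "ereal r \<le> dual_value v m lam"
      by (rule strong_duality)
    then show "ereal r \<le> (SUP (m, lam) \<in> dual_feasible. dual_value v m lam)"
      by (force intro: SUP_upper2)
  qed
  show "(SUP (m, lam) \<in> dual_feasible. dual_value v m lam) \<le> P2 R A b C W T h Q v"
    using weak_duality by (auto intro: SUP_least)
qed

lemma SUP_prob_tuples_eq_SUP_dual_value:
  "(SUP (mu, lam, g) \<in> {(mu, lam, g) | mu lam g. mu \<in> prob_tuples \<and> (\<forall>j. 0 \<le> g $ j) \<and> g \<bullet> ones = 1 \<and>
       (\<Sum>i\<in>UNIV. p i *\<^sub>R lam i) = 0}.
     ereal ((\<Sum>i\<in>UNIV. f_dual A b C W T h Q p i (mu i) (lam i) g) - g \<bullet> v) - penalty R mu g)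
   = (SUP (m, lam) \<in> dual_feasible. dual_value v m lam)"
  (is "(SUP x \<in> ?S. ?f x) = _")
proof -
  define rescale :: "('w \<Rightarrow> real^'j) \<times> ('w \<Rightarrow> real^'m) \<times> (real^'j) \<Rightarrow> ('w \<Rightarrow> real^'j) \<times> ('w \<Rightarrow> real^'m)"
    where "rescale = (\<lambda>(mu, lam, g). (scale_components g mu, lam))"
  have value_eq: "?f x = (\<lambda>(m, lam). dual_value v m lam) (rescale x)" if "x \<in> ?S" for x
    using that unfolding rescale_def dual_value_def
    by (auto simp: f_dual_eq_f_dual_tilde_scale_components penalty_eq_penalty_tilde_scale_components
        sum_inner_scale_components)
  have image_eq: "rescale ` ?S = dual_feasible"
  proof
    show "rescale ` ?S \<subseteq> dual_feasible"
      unfolding rescale_def dual_feasible_def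
      by (auto simp: scale_components_mem_finite_meas_tuples sum_inner_scale_components)
    show "dual_feasible \<subseteq> rescale ` ?S"
    proof (clarify)
      fix m lam assume "(m, lam) \<in> dual_feasible"
      then have m: "m \<in> finite_meas_tuples" "(\<Sum>i\<in>UNIV. m i \<bullet> ones) = 1"
        and lam: "(\<Sum>i\<in>UNIV. p i *\<^sub>R lam i) = 0"
        unfolding dual_feasible_def by auto
      obtain mu g where "mu \<in> prob_tuples" "\<forall>j. 0 \<le> g $ j" "g \<bullet> ones = 1" "m = scale_components g mu"
        using finite_meas_tuple_eq_scale_components[OF m] by blast
      with lam show "(m, lam) \<in> rescale ` ?S"
        unfolding rescale_def by (intro image_eqI[of _ _ "(mu, lam, g)"]) auto
    qed
  qed
  have "(SUP x \<in> ?S. ?f x) = (SUP x \<in> ?S. (\<lambda>(m, lam). dual_value v m lam) (rescale x))"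
    using value_eq by (rule SUP_cong[OF refl])
  also have "\<dots> = (SUP y \<in> rescale ` ?S. (\<lambda>(m, lam). dual_value v m lam) y)"
    by (simp only: image_image)
  finally show ?thesis
    by (simp only: image_eq)
qed

end

theorem theorem5p6:
  fixes p :: "'w::finite \<Rightarrow> real"
    and R :: "('w \<Rightarrow> real^'j::finite) \<Rightarrow> (real^'j) set"
    and A :: "real^'m::finite^'k::finite" and b :: "real^'k"
    and C :: "real^'m^'j"
    and W :: "'w \<Rightarrow> real^'n::finite^'l::finite" and T :: "'w \<Rightarrow> real^'m^'l"
    and h :: "'w \<Rightarrow> real^'l" and Q :: "'w \<Rightarrow> real^'n^'j"
    and v :: "real^'j"
  assumes card_w: "CARD('w) \<ge> 2"
    and p_pos: "\<forall>i. p i > 0" and p_sum: "(\<Sum>i\<in>UNIV. p i) = 1"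
    and risk: "multivariate_convex_risk_measure R"
    and X_ne: "feas_X A b W T h \<noteq> {}" and X_compact: "compact (feas_X A b W T h)"
    and F_ne: "\<forall>i. feas_F A b W T h i \<noteq> {}" and F_compact: "\<forall>i. compact (feas_F A b W T h i)"
  shows "P2 R A b C W T h Q v =
           (SUP (mu, lam, g) \<in> {(mu, lam, g) | (mu :: 'w \<Rightarrow> real^'j) (lam :: 'w \<Rightarrow> real^'m) (g :: real^'j).
                 mu \<in> prob_tuples \<and> (\<forall>j. 0 \<le> g $ j) \<and> g \<bullet> ones = 1 \<and>
                 (\<Sum>i\<in>UNIV. p i *\<^sub>R lam i) = 0}.
              ereal ((\<Sum>i\<in>UNIV. f_dual A b C W T h Q p i (mu i) (lam i) g) - g \<bullet> v)
                - penalty R mu g)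
         \<and> P2 R A b C W T h Q v =
           (SUP (m, lam) \<in> {(m, lam) | (m :: 'w \<Rightarrow> real^'j) (lam :: 'w \<Rightarrow> real^'m).
                 m \<in> finite_meas_tuples \<and> (\<Sum>i\<in>UNIV. m i \<bullet> ones) = 1 \<and>
                 (\<Sum>i\<in>UNIV. p i *\<^sub>R lam i) = 0}.
              ereal ((\<Sum>i\<in>UNIV. f_dual_tilde A b C W T h Q p i (m i) (lam i))
                     - (\<Sum>i\<in>UNIV. m i \<bullet> v))
                - penalty_tilde R m)"
proof -
  interpret two_stage_problem p R A b C W T h Q
    using p_pos p_sum risk X_ne F_ne F_compact by unfold_locales auto
  show ?thesis
    using P2_eq_SUP_dual_value[of v] SUP_prob_tuples_eq_SUP_dual_value[of v]
    unfolding dual_feasible_def dual_value_def by simp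
qed

end
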